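(* Fix any realization of a frame: a finite set $K$ of active devices, slots $\{1,\dots,M\}$, and for each $k\in K$ an intended slot set $I_k\subseteq\{1,\dots,M\}$ and a transmitted slot set $A_k\subseteq I_k$. For each slot $n$ let $A^n=\{k\in K: n\in A_k\}$. Define the genie-aided decoded set $D_{\mathrm g}$ as the result of starting from $D=\emptyset$ and repeatedly adding to $D$ a device $k$ whenever there is a slot $n$ with $A^n\setminus D=\{k\}$, until no such slot exists. Define the IDENTIFY decoded set $D_{\mathrm I}$ as the result of starting from $D=\emptyset$ and repeatedly adding to $D$ a device $k$ whenever there exist a slot $n$ and a subset $T\subseteq S_n(D)$, where $S_n(D)=\{k'\in D: n\in I_{k'}\}$ is the candidate list of slot $n$, such that $T\subseteq A^n$ and $A^n\setminus T=\{k\}$, until no such pair $(n,T)$ yields a new device. Then, with an unlimited number of iterations, $D_{\mathrm I}=D_{\mathrm g}$. Consequently, the IDENTIFY receiver achieves exactly the same packet loss rate as a receiver that knows the positions of the dropped replicas.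
   Context: Setting: irregular repetition slotted ALOHA under a collision channel with energy-harvesting devices. Each active device intends to send identical replicas of its packet in a set $I_k$ of slots of the frame, but some intended replicas may be dropped for lack of energy; $A_k\subseteq I_k$ denotes the slots where replicas were actually transmitted. The receiver knows, upon decoding a device's packet, its intended slot set $I_k$, but not $A_k$. The receiver can classify a slot as idle, singleton (exactly one packet) or collision; subtracting from slot $n$ the packets of a set $T$ of decoded devices yields a singleton slot exactly when all packets in $T$ were actually transmitted in slot $n$ (i.e. $T\subseteq A^n$) and exactly one other packet remains ($|A^n\setminus T|=1$), in which case that remaining packet is decoded. The genie-aided receiver knows the sets $A_k$ and performs standard successive interference cancellation on the transmitted replicas only. The packet loss rate is the probability that a transmitted packet is not decoded by the end of the decoding process. *)

theory Defs
  imports Main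
begin

definition slot_users :: "'a set \<Rightarrow> ('a \<Rightarrow> nat set) \<Rightarrow> nat \<Rightarrow> 'a set" where
  "slot_users K A n = {k \<in> K. n \<in> A k}"

definition cand_list :: "('a \<Rightarrow> nat set) \<Rightarrow> 'a set \<Rightarrow> nat \<Rightarrow> 'a set" where
  "cand_list I D n = {k' \<in> D. n \<in> I k'}"

definition genie_step :: "'a set \<Rightarrow> nat \<Rightarrow> ('a \<Rightarrow> nat set) \<Rightarrow> 'a set \<Rightarrow> 'a set \<Rightarrow> bool" where
  "genie_step K M A D D' \<longleftrightarrow>
     (\<exists>k n. k \<notin> D \<and> n \<in> {1..M} \<and> slot_users K A n - D = {k} \<and> D' = insert k D)"

definition ident_step :: "'a set \<Rightarrow> nat \<Rightarrow> ('a \<Rightarrow> nat set) \<Rightarrow> ('a \<Rightarrow> nat set) \<Rightarrow> 'a set \<Rightarrow> 'a set \<Rightarrow> bool" where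
  "ident_step K M I A D D' \<longleftrightarrow>
     (\<exists>k n T. k \<notin> D \<and> n \<in> {1..M} \<and> T \<subseteq> cand_list I D n \<and>
        T \<subseteq> slot_users K A n \<and> slot_users K A n - T = {k} \<and> D' = insert k D)"

definition process_result :: "('b set \<Rightarrow> 'b set \<Rightarrow> bool) \<Rightarrow> 'b set \<Rightarrow> bool" where
  "process_result step D \<longleftrightarrow> step\<^sup>*\<^sup>* {} D \<and> (\<nexists>D'. step D D')"

abbreviation genie_decoded where
  "genie_decoded K M A D \<equiv> process_result (genie_step K M A) D"

abbreviation ident_decoded where
  "ident_decoded K M I A D \<equiv> process_result (ident_step K M I A) D"

end

theory Submission
  imports Defs
begin

text \<open>A decoded device k with T \<subseteq> A^n lies in D, so A^n - T = {k} forces A^n - D = {k};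
  conversely T = A^n \<inter> D is an admissible candidate subset since A k \<subseteq> I k. Hence
  IDENTIFY and genie-aided SIC take exactly the same steps. The genie process stops
  at the least set closed under singleton slots, because every set closed under
  singleton slots absorbs each of its steps; termination holds as every step adds a
  new device of the finite set K.\<close>

lemma ident_step_eq_genie_step:
  assumes "\<And>k. k \<in> K \<Longrightarrow> A k \<subseteq> I k"
  shows "ident_step K M I A = genie_step K M A"
proof (intro ext iffI)
  fix D D'
  assume "ident_step K M I A D D'"
  then obtain k n T where step: "k \<notin> D" "n \<in> {1..M}" "T \<subseteq> cand_list I D n"
    "T \<subseteq> slot_users K A n" "slot_users K A n - T = {k}" "D' = insert k D"
    unfolding ident_step_def by blast
  have "T \<subseteq> D" using step(3) unfolding cand_list_def by blast
  then have "slot_users K A n - D = {k}" using step by blast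
  then show "genie_step K M A D D'" unfolding genie_step_def using step by blast
next
  fix D D'
  assume "genie_step K M A D D'"
  then obtain k n where step: "k \<notin> D" "n \<in> {1..M}" "slot_users K A n - D = {k}"
    "D' = insert k D"
    unfolding genie_step_def by blast
  let ?T = "slot_users K A n \<inter> D"
  have "?T \<subseteq> cand_list I D n" using assms unfolding cand_list_def slot_users_def by blast
  moreover have "slot_users K A n - ?T = {k}" using step by blast
  ultimately show "ident_step K M I A D D'" unfolding ident_step_def using step by blast
qed

lemma process_result_exists:
  assumes "finite U"
    and grows: "\<And>D D'. step\<^sup>*\<^sup>* {} D \<Longrightarrow> step D D' \<Longrightarrow> D \<subset> D' \<and> D' \<subseteq> U"
  shows "\<exists>D. process_result step D"
proof -
  have "\<exists>D'. process_result step D'" if "step\<^sup>*\<^sup>* {} D" "D \<subseteq> U" for D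
    using that
  proof (induction "card U - card D" arbitrary: D rule: less_induct)
    case less
    show ?case
    proof (cases "\<exists>D'. step D D'")
      case True
      then obtain D' where "step D D'" by blast
      with grows less.prems(1) have "D \<subset> D'" "D' \<subseteq> U" by auto
      moreover have "finite D'" using \<open>D' \<subseteq> U\<close> \<open>finite U\<close> by (rule finite_subset)
      ultimately have "card D < card D'" "card D' \<le> card U"
        using \<open>finite U\<close> by (auto intro: psubset_card_mono card_mono)
      then have "card U - card D' < card U - card D" by linarith
      moreover have "step\<^sup>*\<^sup>* {} D'" using less.prems(1) \<open>step D D'\<close> by simp
      ultimately show ?thesis using less.hyps \<open>D' \<subseteq> U\<close> by blast
    next
      case False
      then show ?thesis using less.prems(1) unfolding process_result_def by blast
    qed
  qed
  then show ?thesis by blast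
qed

lemma genie_step_grows:
  "genie_step K M A D D' \<Longrightarrow> D \<subseteq> K \<Longrightarrow> D \<subset> D' \<and> D' \<subseteq> K"
  unfolding genie_step_def slot_users_def by blast

lemma genie_reachable_subset:
  "(genie_step K M A)\<^sup>*\<^sup>* {} D \<Longrightarrow> D \<subseteq> K"
  by (induction rule: rtranclp_induct) (auto dest: genie_step_grows)

definition singleton_closed :: "'a set \<Rightarrow> nat \<Rightarrow> ('a \<Rightarrow> nat set) \<Rightarrow> 'a set \<Rightarrow> bool" where
  "singleton_closed K M A C \<longleftrightarrow> (\<forall>n\<in>{1..M}. \<forall>k. slot_users K A n - C = {k} \<longrightarrow> k \<in> C)"

lemma genie_terminal_singleton_closed:
  "\<nexists>D'. genie_step K M A D D' \<Longrightarrow> singleton_closed K M A D"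
  unfolding singleton_closed_def genie_step_def by blast

lemma genie_reachable_subset_closed:
  assumes "(genie_step K M A)\<^sup>*\<^sup>* {} D" and "singleton_closed K M A C"
  shows "D \<subseteq> C"
  using assms(1)
proof (induction rule: rtranclp_induct)
  case base
  show ?case by simp
next
  case (step D D')
  then obtain k n where new: "n \<in> {1..M}" "slot_users K A n - D = {k}" "D' = insert k D"
    unfolding genie_step_def by blast
  have "k \<in> C"
  proof (rule ccontr)
    assume "k \<notin> C"
    then have "slot_users K A n - C = {k}" using new(2) step.IH by blast
    then show False using assms(2) new(1) \<open>k \<notin> C\<close> unfolding singleton_closed_def by blast
  qed
  then show ?case using new(3) step.IH by simp
qed

lemma genie_decoded_unique:
  assumes "genie_decoded K M A D1" and "genie_decoded K M A D2"
  shows "D1 = D2"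
proof -
  have "D1 \<subseteq> D2" "D2 \<subseteq> D1"
    using assms genie_reachable_subset_closed genie_terminal_singleton_closed
    unfolding process_result_def by blast+
  then show ?thesis by (rule subset_antisym)
qed

theorem theorem3:
  fixes K :: "'a set" and M :: nat and I A :: "'a \<Rightarrow> nat set"
  assumes "finite K"
    and "\<And>k. k \<in> K \<Longrightarrow> I k \<subseteq> {1..M}"
    and "\<And>k. k \<in> K \<Longrightarrow> A k \<subseteq> I k"
  shows "(\<exists>D. genie_decoded K M A D) \<and> (\<exists>D. ident_decoded K M I A D) \<and>
         (\<forall>Dg DI. genie_decoded K M A Dg \<longrightarrow> ident_decoded K M I A DI \<longrightarrow> DI = Dg)"
proof -
  have same_steps: "ident_step K M I A = genie_step K M A"
    using ident_step_eq_genie_step assms(3) .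
  have "\<exists>D. genie_decoded K M A D"
    using genie_step_grows genie_reachable_subset
    by (intro process_result_exists[OF assms(1)]) blast
  then show ?thesis unfolding same_steps using genie_decoded_unique by blast
qed

end
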